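(* Let $\mathcal{X}$ be a finite set of prompts, $\mathcal{Y}$ a finite set of outputs, $r:\mathcal{X}\times\mathcal{Y}\to\{0,1\}$ a reward function, and $\pi_\theta$ a tabular policy. Suppose $\theta(t)$, $t\ge 0$, follows the gradient flow $\frac{d}{dt}\theta(t) = \nabla \mathcal{J}_{\mathrm{RL}}(\theta(t))$, where $\mathcal{J}_{\mathrm{RL}}(\theta) = \sum_{x\in\mathcal{X}}\mathbb{E}_{y\sim\pi_\theta(\cdot\mid x)}[r(x,y)]$. Then for any prompt $x \in \mathcal{X}$, any output $y \in \mathcal{Y}$, and any time $T \geq 0$: $$\frac{d}{dt}\pi_{\theta(t)}(y\mid x) = \pi_{\theta(t)}(y\mid x)^2\left[r(x, y) - \mathbb{E}_{y'' \sim \pi_{\theta(t)}(\cdot \mid x)}[r(x, y'')]\right] - \pi_{\theta(t)}(y\mid x)\sum_{y' \in \mathcal{Y}}\pi_{\theta(t)}(y'\mid x)^2\left[r(x, y') - \mathbb{E}_{y'' \sim \pi_{\theta(t)}(\cdot \mid x)}[r(x, y'')]\right],$$ and $$\pi_{\theta(T)}(y\mid x) \leq \pi_{\theta(0)}(y\mid x) \cdot \exp(2T).$$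
   Context: A tabular policy assigns an independent trainable logit $\theta_{y,x}\in\mathbb{R}$ to each pair $(y,x)\in\mathcal{Y}\times\mathcal{X}$, with $\pi_\theta(y\mid x) = \exp(\theta_{y,x})/\sum_{y'\in\mathcal{Y}}\exp(\theta_{y',x})$. *)

theory Defs
  imports "HOL-Analysis.Analysis"
begin

definition tab_pi :: "real ^ ('y::finite \<times> 'x::finite) \<Rightarrow> 'y \<Rightarrow> 'x \<Rightarrow> real" where
  "tab_pi \<theta> y x = exp (\<theta> $ (y, x)) / (\<Sum>y'\<in>UNIV. exp (\<theta> $ (y', x)))"

definition exp_reward :: "real ^ ('y::finite \<times> 'x::finite) \<Rightarrow> ('x \<Rightarrow> 'y \<Rightarrow> real) \<Rightarrow> 'x \<Rightarrow> real" where
  "exp_reward \<theta> r x = (\<Sum>y\<in>UNIV. tab_pi \<theta> y x * r x y)"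

definition J_RL :: "('x::finite \<Rightarrow> 'y::finite \<Rightarrow> real) \<Rightarrow> real ^ ('y \<times> 'x) \<Rightarrow> real" where
  "J_RL r \<theta> = (\<Sum>x\<in>UNIV. exp_reward \<theta> r x)"

end

theory Submission
  imports Defs
begin

text \<open>
  The partial derivatives of the objective are
  \<open>\<partial>J/\<partial>\<theta>(y,x) = \<pi>(y|x) (r(x,y) - E\<^sub>x)\<close> with \<open>E\<^sub>x\<close> the expected reward at \<open>x\<close>,
  so the gradient \<open>G\<close> of the hypothesis is determined by comparing directional derivatives.
  Inserting it into the softmax chain rule
  \<open>d\<pi>(y|x) = \<pi>(y|x) (d\<theta>(y,x) - \<Sum>y'. \<pi>(y'|x) d\<theta>(y',x))\<close> gives the stated equation.
  For rewards in \<open>[0,1]\<close> we have \<open>|r - E\<^sub>x| \<le> 1\<close> and \<open>\<pi>\<^sup>2 \<le> \<pi> \<le> 1\<close>, so the right-hand side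
  is at most \<open>2\<pi>(y|x)\<close>; hence \<open>\<pi>(y|x) e\<^sup>-\<^sup>2\<^sup>t\<close> is non-increasing.
\<close>

lemma has_real_derivative_vec_nth:
  fixes \<phi> :: "real \<Rightarrow> real ^ 'n"
  assumes "(\<phi> has_vector_derivative D) (at t within S)"
  shows "((\<lambda>s. \<phi> s $ i) has_real_derivative D $ i) (at t within S)"
proof -
  have "((\<lambda>s. \<phi> s $ i) has_derivative (\<lambda>s. (s *\<^sub>R D) $ i)) (at t within S)"
    using bounded_linear.has_derivative[OF bounded_linear_vec_nth assms[unfolded has_vector_derivative_def]] .
  then show ?thesis
    by (simp add: has_field_derivative_def mult_commute_abs)
qed

lemma tab_pi_pos: "tab_pi \<theta> y x > 0"
  unfolding tab_pi_def by (auto intro!: divide_pos_pos sum_pos)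

lemma sum_tab_pi: "(\<Sum>y\<in>UNIV. tab_pi \<theta> y x) = 1"
proof -
  have "(\<Sum>y'\<in>UNIV. exp (\<theta> $ (y', x))) > 0"
    by (auto intro!: sum_pos)
  then show ?thesis
    unfolding tab_pi_def by (simp add: sum_divide_distrib[symmetric])
qed

lemma tab_pi_le_1: "tab_pi \<theta> y x \<le> 1"
proof -
  have "tab_pi \<theta> y x \<le> (\<Sum>y\<in>UNIV. tab_pi \<theta> y x)"
    by (rule member_le_sum) (auto intro: less_imp_le tab_pi_pos)
  then show ?thesis
    by (simp add: sum_tab_pi)
qed

lemma exp_reward_bounds:
  assumes "\<And>y. r x y \<in> {0..1}"
  shows "0 \<le> exp_reward \<theta> r x" and "exp_reward \<theta> r x \<le> 1"
proof -
  show "0 \<le> exp_reward \<theta> r x"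
    unfolding exp_reward_def using assms
    by (intro sum_nonneg mult_nonneg_nonneg less_imp_le[OF tab_pi_pos]) auto
  have "exp_reward \<theta> r x \<le> (\<Sum>y\<in>UNIV. tab_pi \<theta> y x)"
    unfolding exp_reward_def using assms
    by (intro sum_mono mult_left_le less_imp_le[OF tab_pi_pos]) auto
  then show "exp_reward \<theta> r x \<le> 1"
    by (simp add: sum_tab_pi)
qed

lemma tab_pi_has_real_derivative:
  fixes \<phi> :: "real \<Rightarrow> real ^ ('y::finite \<times> 'x::finite)"
  assumes "(\<phi> has_vector_derivative D) (at t within S)"
  shows "((\<lambda>s. tab_pi (\<phi> s) y x) has_real_derivative
           tab_pi (\<phi> t) y x * (D $ (y, x) - (\<Sum>y'\<in>UNIV. tab_pi (\<phi> t) y' x * D $ (y', x))))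
         (at t within S)"
proof -
  define Z where "Z = (\<Sum>y'\<in>UNIV. exp (\<phi> t $ (y', x)))"
  have "Z > 0"
    unfolding Z_def by (auto intro!: sum_pos)
  have exp_deriv: "((\<lambda>s. exp (\<phi> s $ i)) has_real_derivative exp (\<phi> t $ i) * D $ i) (at t within S)"
    for i
    using DERIV_chain2[OF DERIV_exp has_real_derivative_vec_nth[OF assms]] by simp
  have "((\<lambda>s. tab_pi (\<phi> s) y x) has_real_derivative
          (exp (\<phi> t $ (y, x)) * D $ (y, x) * Z
           - exp (\<phi> t $ (y, x)) * (\<Sum>y'\<in>UNIV. exp (\<phi> t $ (y', x)) * D $ (y', x))) / (Z * Z))
        (at t within S)"
    unfolding tab_pi_def Z_def using \<open>Z > 0\<close>
    by (intro DERIV_divide DERIV_sum exp_deriv) (auto simp: Z_def)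
  moreover have "(exp (\<phi> t $ (y, x)) * D $ (y, x) * Z
           - exp (\<phi> t $ (y, x)) * (\<Sum>y'\<in>UNIV. exp (\<phi> t $ (y', x)) * D $ (y', x))) / (Z * Z)
      = tab_pi (\<phi> t) y x * (D $ (y, x) - (\<Sum>y'\<in>UNIV. tab_pi (\<phi> t) y' x * D $ (y', x)))"
    using \<open>Z > 0\<close> unfolding tab_pi_def Z_def[symmetric]
    by (simp add: field_simps sum_divide_distrib[symmetric])
  ultimately show ?thesis
    by simp
qed

lemma exp_reward_has_real_derivative:
  fixes \<phi> :: "real \<Rightarrow> real ^ ('y::finite \<times> 'x::finite)"
  assumes "(\<phi> has_vector_derivative D) (at t within S)"
  shows "((\<lambda>s. exp_reward (\<phi> s) r x) has_real_derivative
           (\<Sum>y\<in>UNIV. tab_pi (\<phi> t) y x * (r x y - exp_reward (\<phi> t) r x) * D $ (y, x)))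
         (at t within S)"
proof -
  let ?\<pi> = "\<lambda>y. tab_pi (\<phi> t) y x"
  let ?m = "\<Sum>y'\<in>UNIV. ?\<pi> y' * D $ (y', x)"
  have deriv: "((\<lambda>s. exp_reward (\<phi> s) r x) has_real_derivative
          (\<Sum>y\<in>UNIV. ?\<pi> y * (D $ (y, x) - ?m) * r x y)) (at t within S)"
    unfolding exp_reward_def
    by (intro DERIV_sum DERIV_cmult_right tab_pi_has_real_derivative[OF assms])
  have "(\<Sum>y\<in>UNIV. ?\<pi> y * (D $ (y, x) - ?m) * r x y)
      = (\<Sum>y\<in>UNIV. ?\<pi> y * r x y * D $ (y, x) - ?m * (?\<pi> y * r x y))"
    by (intro sum.cong) (auto simp: algebra_simps)
  also have "\<dots> = (\<Sum>y\<in>UNIV. ?\<pi> y * r x y * D $ (y, x)) - exp_reward (\<phi> t) r x * ?m"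
    by (simp add: exp_reward_def sum_subtractf sum_distrib_right[symmetric] mult.commute)
  also have "\<dots> = (\<Sum>y\<in>UNIV. ?\<pi> y * (r x y - exp_reward (\<phi> t) r x) * D $ (y, x))"
    by (simp add: algebra_simps sum_subtractf sum_distrib_left)
  finally show ?thesis
    using deriv by simp
qed

definition J_RL_grad :: "('x::finite \<Rightarrow> 'y::finite \<Rightarrow> real) \<Rightarrow> real ^ ('y \<times> 'x) \<Rightarrow> real ^ ('y \<times> 'x)"
  where "J_RL_grad r \<theta> = (\<chi> i. case i of (y, x) \<Rightarrow> tab_pi \<theta> y x * (r x y - exp_reward \<theta> r x))"

lemma J_RL_grad_nth [simp]:
  "J_RL_grad r \<theta> $ (y, x) = tab_pi \<theta> y x * (r x y - exp_reward \<theta> r x)"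
  by (simp add: J_RL_grad_def)

lemma J_RL_has_real_derivative:
  fixes \<phi> :: "real \<Rightarrow> real ^ ('y::finite \<times> 'x::finite)"
  assumes "(\<phi> has_vector_derivative D) (at t within S)"
  shows "((\<lambda>s. J_RL r (\<phi> s)) has_real_derivative J_RL_grad r (\<phi> t) \<bullet> D) (at t within S)"
proof -
  have "((\<lambda>s. J_RL r (\<phi> s)) has_real_derivative
          (\<Sum>x\<in>UNIV. \<Sum>y\<in>UNIV. J_RL_grad r (\<phi> t) $ (y, x) * D $ (y, x))) (at t within S)"
    unfolding J_RL_def J_RL_grad_nth
    by (intro DERIV_sum exp_reward_has_real_derivative[OF assms])
  moreover have "(\<Sum>x\<in>UNIV. \<Sum>y\<in>UNIV. J_RL_grad r (\<phi> t) $ (y, x) * D $ (y, x))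
      = J_RL_grad r (\<phi> t) \<bullet> D"
    unfolding inner_vec_def UNIV_Times_UNIV[symmetric] sum.cartesian_product'
    by (simp only: inner_real_def) (rule sum.swap)
  ultimately show ?thesis
    by simp
qed

lemma J_RL_gradient_eq:
  assumes "(J_RL r has_derivative (\<lambda>h. G \<bullet> h)) (at \<theta>)"
  shows "G = J_RL_grad r \<theta>"
proof -
  have "G \<bullet> a = J_RL_grad r \<theta> \<bullet> a" for a
  proof -
    have line: "((\<lambda>s. \<theta> + s *\<^sub>R a) has_vector_derivative a) (at 0)"
      by (auto intro!: derivative_eq_intros)
    have "((\<lambda>s. J_RL r (\<theta> + s *\<^sub>R a)) has_real_derivative G \<bullet> a) (at 0)"
      using vector_derivative_diff_chain_within[OF line has_derivative_at_withinI] assms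
      by (simp add: has_real_derivative_iff_has_vector_derivative o_def)
    moreover have "((\<lambda>s. J_RL r (\<theta> + s *\<^sub>R a)) has_real_derivative J_RL_grad r \<theta> \<bullet> a) (at 0)"
      using J_RL_has_real_derivative[OF line] by simp
    ultimately show ?thesis
      by (rule DERIV_unique)
  qed
  then show ?thesis
    using vector_eq_rdot by blast
qed

definition tab_pi_flow_rate ::
    "('x::finite \<Rightarrow> 'y::finite \<Rightarrow> real) \<Rightarrow> real ^ ('y \<times> 'x) \<Rightarrow> 'y \<Rightarrow> 'x \<Rightarrow> real"
  where "tab_pi_flow_rate r \<theta> y x =
    (tab_pi \<theta> y x)\<^sup>2 * (r x y - exp_reward \<theta> r x)
    - tab_pi \<theta> y x * (\<Sum>y'\<in>UNIV. (tab_pi \<theta> y' x)\<^sup>2 * (r x y' - exp_reward \<theta> r x))"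

lemma tab_pi_gradient_flow:
  fixes \<theta> :: "real \<Rightarrow> real ^ ('y::finite \<times> 'x::finite)"
  assumes "(J_RL r has_derivative (\<lambda>h. g \<bullet> h)) (at (\<theta> t))"
    and "(\<theta> has_vector_derivative g) (at t within S)"
  shows "((\<lambda>s. tab_pi (\<theta> s) y x) has_real_derivative tab_pi_flow_rate r (\<theta> t) y x) (at t within S)"
proof -
  have "g = J_RL_grad r (\<theta> t)"
    using J_RL_gradient_eq[OF assms(1)] .
  with tab_pi_has_real_derivative[OF assms(2), of y x] show ?thesis
    by (simp add: tab_pi_flow_rate_def power2_eq_square right_diff_distrib mult.assoc)
qed

lemma tab_pi_flow_rate_le:
  assumes "\<And>y. r x y \<in> {0..1}"
  shows "tab_pi_flow_rate r \<theta> y x \<le> 2 * tab_pi \<theta> y x"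
proof -
  let ?\<pi> = "\<lambda>y. tab_pi \<theta> y x" and ?E = "exp_reward \<theta> r x"
  have scaled: "c * d \<le> c" if "0 \<le> c" "\<bar>d\<bar> \<le> 1" for c d :: real
    using mult_left_mono[OF abs_le_D1[OF that(2)] that(1)] by simp
  have dev: "\<bar>r x z - ?E\<bar> \<le> 1" "\<bar>?E - r x z\<bar> \<le> 1" for z
    using exp_reward_bounds[where r = r and x = x and \<theta> = \<theta>, OF assms] assms[of z] by auto
  have sq: "(?\<pi> z)\<^sup>2 \<le> ?\<pi> z" for z
    using tab_pi_le_1[of \<theta> z x] tab_pi_pos[of \<theta> z x] by (simp add: power2_eq_square mult_left_le)
  have own: "(?\<pi> y)\<^sup>2 * (r x y - ?E) \<le> ?\<pi> y"
    using scaled[OF zero_le_power2[of "?\<pi> y"] dev(1)[of y]] sq[of y] by linarith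
  have "- (\<Sum>y'\<in>UNIV. (?\<pi> y')\<^sup>2 * (r x y' - ?E)) = (\<Sum>y'\<in>UNIV. (?\<pi> y')\<^sup>2 * (?E - r x y'))"
    by (simp add: sum_negf[symmetric] algebra_simps)
  also have "\<dots> \<le> (\<Sum>y'\<in>UNIV. ?\<pi> y')"
    using scaled[OF zero_le_power2 dev(2)] sq
    by (intro sum_mono) (meson order_trans)
  finally have others: "- (\<Sum>y'\<in>UNIV. (?\<pi> y')\<^sup>2 * (r x y' - ?E)) \<le> 1"
    by (simp add: sum_tab_pi)
  have "?\<pi> y * - (\<Sum>y'\<in>UNIV. (?\<pi> y')\<^sup>2 * (r x y' - ?E)) \<le> ?\<pi> y"
    using mult_left_mono[OF others less_imp_le[OF tab_pi_pos[of \<theta> y x]]] by simp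
  with own show ?thesis
    unfolding tab_pi_flow_rate_def by simp
qed

lemma has_real_derivative_le_mult_imp_le_exp:
  fixes f f' :: "real \<Rightarrow> real"
  assumes deriv: "\<And>t. a \<le> t \<Longrightarrow> (f has_real_derivative f' t) (at t within {a..})"
    and rate: "\<And>t. a \<le> t \<Longrightarrow> f' t \<le> c * f t"
    and "a \<le> T"
  shows "f T \<le> f a * exp (c * (T - a))"
proof -
  define g where "g t = f t * exp (- (c * t))" for t
  define g' where "g' t = (f' t - c * f t) * exp (- (c * t))" for t
  have g_deriv: "(g has_derivative (\<lambda>h. h * g' t)) (at t within {a..T})"
    if "a \<le> t" "t \<le> T" for t
  proof -
    have "(g has_real_derivative g' t) (at t within {a..})"
      unfolding g_def g'_def using deriv[OF \<open>a \<le> t\<close>]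
      by (auto intro!: derivative_eq_intros simp: algebra_simps)
    then show ?thesis
      by (auto simp: has_field_derivative_def mult_commute_abs intro: has_derivative_subset)
  qed
  then obtain z where z: "z \<in> {a..T}" "g T - g a = (T - a) * g' z"
    using mvt_very_simple[of a T g "\<lambda>t h. h * g' t"] g_deriv \<open>a \<le> T\<close> by blast
  have "g' z \<le> 0"
    unfolding g'_def using rate[of z] z(1) by (intro mult_nonpos_nonneg) auto
  with \<open>a \<le> T\<close> have "(T - a) * g' z \<le> 0"
    by (intro mult_nonneg_nonpos) auto
  with z have "g T \<le> g a"
    by linarith
  then show ?thesis
    by (simp add: g_def right_diff_distrib exp_diff exp_minus field_simps)
qed

theorem lemma2:
  fixes r :: "'x::finite \<Rightarrow> 'y::finite \<Rightarrow> real"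
    and \<theta> :: "real \<Rightarrow> real ^ ('y \<times> 'x)"
    and G :: "real \<Rightarrow> real ^ ('y \<times> 'x)"
  assumes reward01: "\<And>x y. r x y \<in> {0, 1}"
    and gradient: "\<And>t. t \<ge> 0 \<Longrightarrow> (J_RL r has_derivative (\<lambda>h. G t \<bullet> h)) (at (\<theta> t))"
    and flow: "\<And>t. t \<ge> 0 \<Longrightarrow> (\<theta> has_vector_derivative G t) (at t within {0..})"
  shows "\<forall>x y. \<forall>T\<ge>0.
           ((\<lambda>t. tab_pi (\<theta> t) y x) has_real_derivative
              (tab_pi (\<theta> T) y x)\<^sup>2 * (r x y - exp_reward (\<theta> T) r x)
              - tab_pi (\<theta> T) y x *
                (\<Sum>y'\<in>UNIV. (tab_pi (\<theta> T) y' x)\<^sup>2 * (r x y' - exp_reward (\<theta> T) r x)))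
             (at T within {0..})
         \<and> tab_pi (\<theta> T) y x \<le> tab_pi (\<theta> 0) y x * exp (2 * T)"
proof -
  have claim:
    "((\<lambda>s. tab_pi (\<theta> s) y x) has_real_derivative tab_pi_flow_rate r (\<theta> T) y x) (at T within {0..})
     \<and> tab_pi (\<theta> T) y x \<le> tab_pi (\<theta> 0) y x * exp (2 * T)" if "T \<ge> 0" for x y T
  proof
    have deriv: "((\<lambda>s. tab_pi (\<theta> s) y x) has_real_derivative tab_pi_flow_rate r (\<theta> t) y x)
        (at t within {0..})" if "t \<ge> 0" for t
      using tab_pi_gradient_flow[OF gradient[OF that] flow[OF that]] .
    then show "((\<lambda>s. tab_pi (\<theta> s) y x) has_real_derivative tab_pi_flow_rate r (\<theta> T) y x)
        (at T within {0..})"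
      using \<open>T \<ge> 0\<close> .
    have "r x y' \<in> {0..1}" for y'
      using reward01[of x y'] by auto
    then have "tab_pi_flow_rate r (\<theta> t) y x \<le> 2 * tab_pi (\<theta> t) y x" for t
      by (rule tab_pi_flow_rate_le)
    then show "tab_pi (\<theta> T) y x \<le> tab_pi (\<theta> 0) y x * exp (2 * T)"
      using has_real_derivative_le_mult_imp_le_exp[OF deriv, of 2 T] \<open>T \<ge> 0\<close> by simp
  qed
  then show ?thesis
    unfolding tab_pi_flow_rate_def by blast
qed

end
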